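(* Let $f$ be a quadratic rational map. Then there exists $k\in\mathbb{N}$ such that $\mathrm{Deck}(f^k)$ is a cyclic group of order greater than $2$ if and only if $f$ is a power map.
   Context: $\mathrm{Deck}(F)=\{\tau \text{ Möbius} : F\circ\tau=F\}$; $f^k$ is the $k$-th iterate. A power map is a rational map Möbius-conjugate to $z\mapsto z^2$ or $z\mapsto z^{-2}$ (equivalently, a quadratic map whose set of critical points equals its set of critical values). *)

theory Defs
  imports "HOL-Computational_Algebra.Polynomial_Factorial" "HOL-Analysis.Analysis"
begin

text \<open>The Riemann sphere: None is the point at infinity.\<close>
type_synonym sphere = "complex option"

definition rat_eval :: "complex poly \<Rightarrow> complex poly \<Rightarrow> sphere \<Rightarrow> sphere" where
  "rat_eval p q w = (case w of
      Some z \<Rightarrow> (if poly q z = 0 then None else Some (poly p z / poly q z))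
    | None \<Rightarrow> (if degree p > degree q then None
               else if degree p = degree q then Some (lead_coeff p / lead_coeff q)
               else Some 0))"

definition rational_map_deg :: "(sphere \<Rightarrow> sphere) \<Rightarrow> nat \<Rightarrow> bool" where
  "rational_map_deg f d \<longleftrightarrow> (\<exists>p q. q \<noteq> 0 \<and> coprime p q \<and>
       max (degree p) (degree q) = d \<and> f = rat_eval p q)"

definition quadratic_map :: "(sphere \<Rightarrow> sphere) \<Rightarrow> bool" where
  "quadratic_map f \<longleftrightarrow> rational_map_deg f 2"

definition moebius :: "(sphere \<Rightarrow> sphere) \<Rightarrow> bool" where
  "moebius \<tau> \<longleftrightarrow> rational_map_deg \<tau> 1"

definition Deck :: "(sphere \<Rightarrow> sphere) \<Rightarrow> (sphere \<Rightarrow> sphere) set" where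
  "Deck F = {\<tau>. moebius \<tau> \<and> F \<circ> \<tau> = F}"

definition cyclic_order_gt2 :: "(sphere \<Rightarrow> sphere) set \<Rightarrow> bool" where
  "cyclic_order_gt2 G \<longleftrightarrow> finite G \<and> card G > 2 \<and>
     (\<exists>g\<in>G. G = {g ^^ n | n. True})"

definition sq_map :: "sphere \<Rightarrow> sphere" where
  "sq_map = rat_eval [:0, 0, 1:] [:1:]"

definition inv_sq_map :: "sphere \<Rightarrow> sphere" where
  "inv_sq_map = rat_eval [:1:] [:0, 0, 1:]"

definition power_map :: "(sphere \<Rightarrow> sphere) \<Rightarrow> bool" where
  "power_map f \<longleftrightarrow> (\<exists>\<mu>. moebius \<mu> \<and>
      (f \<circ> \<mu> = \<mu> \<circ> sq_map \<or> f \<circ> \<mu> = \<mu> \<circ> inv_sq_map))"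

end

(*
  Simultaneous diagonalisation of the pencil spanned by numerator and denominator writes every
  quadratic map as N o z^2 o M with Moebius maps M, N; conjugating by M, it suffices to treat
  h = A o z^2, and all notions involved are invariant under Moebius conjugation.

  Suppose Deck(h^k) is cyclic of order > 2. Then k > 0 and z -> -z lies in it, so the
  generator g commutes with z -> -z; hence g fixes or swaps 0 and infinity, and since swapping
  maps are involutions, g(z) = t z with t^2 <> 1. Now h o g = phi o h with phi = A o (t^2 z) o A^-1,
  so phi is again a deck transformation, i.e. a nontrivial scaling. Thus A maps {0, infinity},
  the fixed points of z -> t^2 z, to the fixed points of phi, which are again 0 and infinity, and
  h is conjugate to z^2 or z^-2 by a scaling. For power maps, the second iterate is conjugate to
  z^4, whose deck group consists of the four rotations z -> i^n z.
*)
theory Submission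
  imports Defs "HOL-Computational_Algebra.Fundamental_Theorem_Algebra"
begin

section \<open>Homogeneous coordinates on the Riemann sphere\<close>

definition sphere_of :: "complex \<Rightarrow> complex \<Rightarrow> sphere" where
  "sphere_of x y = (if y = 0 then None else Some (x / y))"

definition hx :: "sphere \<Rightarrow> complex" where
  "hx w = (case w of None \<Rightarrow> 1 | Some z \<Rightarrow> z)"

definition hy :: "sphere \<Rightarrow> complex" where
  "hy w = (case w of None \<Rightarrow> 0 | Some z \<Rightarrow> 1)"

lemma sphere_of_hcoords [simp]: "sphere_of (hx w) (hy w) = w"
  by (cases w) (auto simp: sphere_of_def hx_def hy_def)

lemma hcoords_nonzero: "hx w \<noteq> 0 \<or> hy w \<noteq> 0"
  by (cases w) (auto simp: hx_def hy_def)

lemma sphere_of_scale: "k \<noteq> 0 \<Longrightarrow> sphere_of (k * x) (k * y) = sphere_of x y"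
  by (auto simp: sphere_of_def)

lemma hcoords_sphere_of:
  assumes "x \<noteq> 0 \<or> y \<noteq> 0"
  obtains k where "k \<noteq> 0" "x = k * hx (sphere_of x y)" "y = k * hy (sphere_of x y)"
proof (cases "y = 0")
  case True
  with assms that[of x] show ?thesis by (auto simp: sphere_of_def hx_def hy_def)
next
  case False
  with that[of y] show ?thesis by (auto simp: sphere_of_def hx_def hy_def)
qed

lemma homogeneous_map_sphere_of:
  assumes F: "\<And>k x y. F (k * x) (k * y) = k ^ d * F x y"
    and G: "\<And>k x y. G (k * x) (k * y) = k ^ d * G x y"
    and "x \<noteq> 0 \<or> y \<noteq> 0"
  shows "sphere_of (F (hx (sphere_of x y)) (hy (sphere_of x y))) (G (hx (sphere_of x y)) (hy (sphere_of x y)))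
       = sphere_of (F x y) (G x y)"
proof -
  obtain k where k: "k \<noteq> 0" "x = k * hx (sphere_of x y)" "y = k * hy (sphere_of x y)"
    using hcoords_sphere_of[OF assms(3)] by blast
  show ?thesis
    by (subst (3 4) k(2), subst (3 4) k(3)) (simp add: F G sphere_of_scale k(1))
qed

definition hom_poly :: "complex poly \<Rightarrow> nat \<Rightarrow> complex \<Rightarrow> complex \<Rightarrow> complex" where
  "hom_poly p d x y = (\<Sum>i\<le>d. coeff p i * x ^ i * y ^ (d - i))"

lemma hom_poly_affine:
  assumes "degree p \<le> d"
  shows "hom_poly p d z 1 = poly p z"
proof -
  have "hom_poly p d z 1 = (\<Sum>i\<le>d. coeff p i * z ^ i)" by (simp add: hom_poly_def)
  also have "\<dots> = (\<Sum>i\<le>degree p. coeff p i * z ^ i)"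
    by (rule sum.mono_neutral_right) (use assms in \<open>auto simp: coeff_eq_0\<close>)
  also have "\<dots> = poly p z" by (simp add: poly_altdef)
  finally show ?thesis .
qed

lemma hom_poly_infinity: "hom_poly p d 1 0 = coeff p d"
proof -
  have "hom_poly p d 1 0 = (\<Sum>i\<le>d. if i = d then coeff p i else 0)"
    unfolding hom_poly_def by (rule sum.cong) auto
  then show ?thesis by simp
qed

lemma hom_poly_1: "hom_poly p 1 x y = coeff p 1 * x + coeff p 0 * y"
  by (simp add: hom_poly_def algebra_simps)

lemma hom_poly_2: "hom_poly p 2 x y = coeff p 2 * x^2 + coeff p 1 * x * y + coeff p 0 * y^2"
  by (simp add: hom_poly_def numeral_2_eq_2 algebra_simps)

lemma rat_eval_homogeneous:
  assumes "q \<noteq> 0" "max (degree p) (degree q) = d"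
  shows "rat_eval p q w = sphere_of (hom_poly p d (hx w) (hy w)) (hom_poly q d (hx w) (hy w))"
  using assms
  by (cases w) (auto simp: rat_eval_def hx_def hy_def hom_poly_infinity hom_poly_affine
      sphere_of_def coeff_eq_0 max_def split: if_splits)

lemma coprime_poly_if_no_common_root:
  fixes p q :: "complex poly"
  assumes "\<And>z. poly p z \<noteq> 0 \<or> poly q z \<noteq> 0"
  shows "coprime p q"
proof (rule coprimeI)
  fix r assume rp: "r dvd p" and rq: "r dvd q"
  have "r \<noteq> 0"
    using rp rq assms[of 0] by auto
  show "is_unit r"
  proof (cases "degree r = 0")
    case True
    with \<open>r \<noteq> 0\<close> show ?thesis
      by (metis degree_eq_zeroE is_unit_const_poly_iff dvd_field_iff pCons_0_0)
  next
    case False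
    then obtain z where "poly r z = 0"
      using fundamental_theorem_of_algebra constant_degree by metis
    then have "[:-z, 1:] dvd p" "[:-z, 1:] dvd q"
      using rp rq by (auto simp: poly_eq_0_iff_dvd intro: dvd_trans)
    with assms[of z] show ?thesis by (simp add: poly_eq_0_iff_dvd)
  qed
qed

section \<open>Moebius maps\<close>

definition mobius_map :: "complex \<Rightarrow> complex \<Rightarrow> complex \<Rightarrow> complex \<Rightarrow> sphere \<Rightarrow> sphere" where
  "mobius_map a b c d w = sphere_of (a * hx w + b * hy w) (c * hx w + d * hy w)"

lemma mobius_map_Some: "mobius_map a b c d (Some z) = sphere_of (a * z + b) (c * z + d)"
  by (simp add: mobius_map_def hx_def hy_def)

lemma mobius_map_None: "mobius_map a b c d None = sphere_of a c"
  by (simp add: mobius_map_def hx_def hy_def)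

lemma mobius_map_sphere_of:
  "x \<noteq> 0 \<or> y \<noteq> 0 \<Longrightarrow> mobius_map a b c d (sphere_of x y) = sphere_of (a * x + b * y) (c * x + d * y)"
  unfolding mobius_map_def
  by (rule homogeneous_map_sphere_of[where d = 1]) (simp_all add: algebra_simps)

lemma linear_map_nonzero:
  assumes "a * d - b * c \<noteq> (0::complex)" "x \<noteq> 0 \<or> y \<noteq> 0"
  shows "a * x + b * y \<noteq> 0 \<or> c * x + d * y \<noteq> 0"
proof (rule ccontr)
  assume "\<not> ?thesis"
  moreover have "(a * d - b * c) * x = d * (a * x + b * y) - b * (c * x + d * y)"
    and "(a * d - b * c) * y = a * (c * x + d * y) - c * (a * x + b * y)"
    by (simp_all add: algebra_simps)
  ultimately show False using assms by auto
qed

lemma mobius_map_comp: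
  assumes "a' * d' - b' * c' \<noteq> 0"
  shows "mobius_map a b c d \<circ> mobius_map a' b' c' d'
       = mobius_map (a * a' + b * c') (a * b' + b * d') (c * a' + d * c') (c * b' + d * d')"
proof
  fix w
  have "a' * hx w + b' * hy w \<noteq> 0 \<or> c' * hx w + d' * hy w \<noteq> 0"
    using linear_map_nonzero[OF assms hcoords_nonzero] .
  then show "(mobius_map a b c d \<circ> mobius_map a' b' c' d') w
      = mobius_map (a * a' + b * c') (a * b' + b * d') (c * a' + d * c') (c * b' + d * d') w"
    by (simp add: mobius_map_def[of a' b' c' d'] mobius_map_sphere_of) (simp add: mobius_map_def algebra_simps)
qed

lemma mobius_map_scalar: "k \<noteq> 0 \<Longrightarrow> mobius_map k 0 0 k = id"
  by (auto simp: mobius_map_def fun_eq_iff sphere_of_def hx_def hy_def split: option.splits)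

lemma mobius_map_adjugate:
  assumes "a * d - b * c \<noteq> 0"
  shows "mobius_map d (-b) (-c) a \<circ> mobius_map a b c d = id"
    and "mobius_map a b c d \<circ> mobius_map d (-b) (-c) a = id"
proof -
  have "d * a - (-b) * (-c) \<noteq> 0" using assms by (simp add: algebra_simps)
  with assms show "mobius_map d (-b) (-c) a \<circ> mobius_map a b c d = id"
      "mobius_map a b c d \<circ> mobius_map d (-b) (-c) a = id"
    by (simp_all add: mobius_map_comp algebra_simps mobius_map_scalar)
qed

lemma rat_eval_linear:
  assumes "q \<noteq> 0" "max (degree p) (degree q) = 1"
  shows "rat_eval p q = mobius_map (coeff p 1) (coeff p 0) (coeff q 1) (coeff q 0)"
  by (rule ext) (simp only: rat_eval_homogeneous[OF assms] hom_poly_1 mobius_map_def)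

lemma poly_degree_le_1: "degree p \<le> 1 \<Longrightarrow> p = [:coeff p 0, coeff p 1:]"
  by (auto simp: poly_eq_iff coeff_pCons coeff_eq_0 split: nat.split)

lemma linear_coprime_det_nonzero:
  fixes p q :: "complex poly"
  assumes "q \<noteq> 0" "coprime p q" "max (degree p) (degree q) = 1"
  shows "coeff p 1 * coeff q 0 - coeff p 0 * coeff q 1 \<noteq> 0"
proof
  assume det: "coeff p 1 * coeff q 0 - coeff p 0 * coeff q 1 = 0"
  have p: "p = [:coeff p 0, coeff p 1:]" and q: "q = [:coeff q 0, coeff q 1:]"
    using assms(3) poly_degree_le_1 max.cobounded1 max.cobounded2 by metis+
  show False
  proof (cases "coeff q 1 = 0")
    case False
    define z where "z = - coeff q 0 / coeff q 1"
    have "poly q z = 0" "poly p z = 0"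
      using False det by (subst p q, simp add: z_def field_simps)+
    then show False using coprime_poly_0[OF assms(2)] by metis
  next
    case True
    with q assms(1) have "coeff q 0 \<noteq> 0" by (metis pCons_0_0)
    with True det have "coeff p 1 = 0" by simp
    with True have "degree p = 0" "degree q = 0"
      by (subst p q, simp)+
    with assms(3) show False by simp
  qed
qed

lemma moebius_iff_mobius_map: "moebius \<tau> \<longleftrightarrow> (\<exists>a b c d. a * d - b * c \<noteq> 0 \<and> \<tau> = mobius_map a b c d)"
proof
  assume "moebius \<tau>"
  then obtain p q where "q \<noteq> 0" "coprime p q" "max (degree p) (degree q) = 1" "\<tau> = rat_eval p q"
    by (auto simp: moebius_def rational_map_deg_def)
  then show "\<exists>a b c d. a * d - b * c \<noteq> 0 \<and> \<tau> = mobius_map a b c d"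
    using rat_eval_linear linear_coprime_det_nonzero by blast
next
  assume "\<exists>a b c d. a * d - b * c \<noteq> 0 \<and> \<tau> = mobius_map a b c d"
  then obtain a b c d where det: "a * d - b * c \<noteq> 0" and \<tau>: "\<tau> = mobius_map a b c d" by blast
  have "[:d, c:] \<noteq> 0" "max (degree [:b, a:]) (degree [:d, c:]) = 1"
    using det by auto
  moreover have "coprime [:b, a:] [:d, c:]"
    by (rule coprime_poly_if_no_common_root)
       (use linear_map_nonzero[OF det, of _ 1] in \<open>simp add: algebra_simps\<close>)
  moreover have "\<tau> = rat_eval [:b, a:] [:d, c:]"
    using rat_eval_linear[OF calculation(1,2)] \<tau> by simp
  ultimately show "moebius \<tau>"
    unfolding moebius_def rational_map_deg_def by blast
qed

lemma moebius_mobius_map: "a * d - b * c \<noteq> 0 \<Longrightarrow> moebius (mobius_map a b c d)"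
  using moebius_iff_mobius_map by blast

lemma moebius_comp: "moebius \<alpha> \<Longrightarrow> moebius \<beta> \<Longrightarrow> moebius (\<alpha> \<circ> \<beta>)"
proof -
  assume "moebius \<alpha>" "moebius \<beta>"
  then obtain a b c d a' b' c' d' where
    \<alpha>: "a * d - b * c \<noteq> 0" "\<alpha> = mobius_map a b c d" and
    \<beta>: "a' * d' - b' * c' \<noteq> 0" "\<beta> = mobius_map a' b' c' d'"
    by (auto simp: moebius_iff_mobius_map)
  have "(a * a' + b * c') * (c * b' + d * d') - (a * b' + b * d') * (c * a' + d * c')
      = (a * d - b * c) * (a' * d' - b' * c')"
    by (simp add: algebra_simps)
  with \<alpha> \<beta> show "moebius (\<alpha> \<circ> \<beta>)"
    by (simp add: mobius_map_comp moebius_mobius_map)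
qed

lemma moebius_inverse:
  assumes "moebius \<alpha>"
  obtains \<beta> where "moebius \<beta>" "\<And>x. \<alpha> (\<beta> x) = x" "\<And>x. \<beta> (\<alpha> x) = x"
proof -
  obtain a b c d where det: "a * d - b * c \<noteq> 0" and \<alpha>: "\<alpha> = mobius_map a b c d"
    using assms by (auto simp: moebius_iff_mobius_map)
  have "d * a - (-b) * (-c) \<noteq> 0" using det by (simp add: algebra_simps)
  with that[of "mobius_map d (-b) (-c) a"] mobius_map_adjugate[OF det] show thesis
    by (auto simp: \<alpha> moebius_mobius_map fun_eq_iff)
qed

lemma moebius_inj: "moebius \<alpha> \<Longrightarrow> \<alpha> x = \<alpha> y \<Longrightarrow> x = y"
  by (metis moebius_inverse)

section \<open>Pairs of binary quadratic forms\<close>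

definition qform :: "complex \<Rightarrow> complex \<Rightarrow> complex \<Rightarrow> complex \<Rightarrow> complex \<Rightarrow> complex" where
  "qform a b c x y = a * x^2 + b * x * y + c * y^2"

lemma qform_product: "qform (u * s) (u * t + v * s) (v * t) x y = (u * x + v * y) * (s * x + t * y)"
  by (simp add: qform_def power2_eq_square algebra_simps)

lemma qform_factor:
  fixes a b c :: complex
  obtains u v s t where "a = u * s" "b = u * t + v * s" "c = v * t"
proof (cases "a = 0")
  case True
  show ?thesis by (rule that[where u = b and v = c and s = 0 and t = 1]) (simp_all add: True)
next
  case False
  define r1 where "r1 = (- b + csqrt (b^2 - 4 * a * c)) / (2 * a)"
  define r2 where "r2 = (- b - csqrt (b^2 - 4 * a * c)) / (2 * a)"
  have "b = - a * (r1 + r2)"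
    using False by (simp add: r1_def r2_def field_simps)
  moreover have "r1 * r2 = (b^2 - (csqrt (b^2 - 4 * a * c))^2) / (4 * a^2)"
    using False by (simp add: r1_def r2_def field_simps power2_eq_square)
  then have "r1 * r2 = (4 * a * c) / (4 * a^2)"
    by simp
  then have "c = a * (r1 * r2)"
    using False by (simp add: field_simps power2_eq_square)
  ultimately show ?thesis
    using that[where u = a and v = "- a * r1" and s = 1 and t = "- r2"] by (simp add: algebra_simps)
qed

lemma qform_has_zero:
  fixes a b c :: complex
  obtains x y where "x \<noteq> 0 \<or> y \<noteq> 0" "qform a b c x y = 0"
proof -
  obtain u v s t where "a = u * s" "b = u * t + v * s" "c = v * t"
    by (rule qform_factor)
  then have qf: "qform a b c x y = (u * x + v * y) * (s * x + t * y)" for x y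
    by (simp add: qform_product)
  show thesis
  proof (cases "u = 0 \<and> v = 0")
    case True
    with that[of 1 0] qf show ?thesis by simp
  next
    case False
    with that[of "- v" u] qf show ?thesis by (auto simp: algebra_simps)
  qed
qed

lemma qform_square_if_disc_zero:
  assumes "b^2 = 4 * a * c"
  obtains l1 l2 where "\<And>x y. qform a b c x y = (l1 * x + l2 * y)^2"
proof (cases "a = 0")
  case True
  with assms that[of 0 "csqrt c"] show ?thesis by (simp add: qform_def power_mult_distrib)
next
  case False
  define l where "l = csqrt a"
  have l: "l^2 = a" "l \<noteq> 0" using False by (auto simp: l_def)
  have c: "c = b^2 / (4 * a)" using assms False by (simp add: field_simps)
  have "qform a b c x y = (l * x + (b / (2 * l)) * y)^2" for x y
  proof -
    have "(l * x + b / (2 * l) * y)^2 = l^2 * x^2 + b * x * y + b^2 / (4 * l^2) * y^2"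
      using l(2) by (simp add: field_simps power2_eq_square)
    then show ?thesis by (simp add: l c qform_def)
  qed
  with that show ?thesis by blast
qed

definition qform_resultant ::
    "complex \<Rightarrow> complex \<Rightarrow> complex \<Rightarrow> complex \<Rightarrow> complex \<Rightarrow> complex \<Rightarrow> complex" where
  "qform_resultant p2 p1 p0 q2 q1 q0 = (p2 * q0 - p0 * q2)^2 - (p2 * q1 - p1 * q2) * (p1 * q0 - p0 * q1)"

lemma qform_resultant_product:
  "qform_resultant p2 p1 p0 (u * s) (u * t + v * s) (v * t) = qform p2 p1 p0 (- v) u * qform p2 p1 p0 (- t) s"
  unfolding qform_resultant_def qform_def by algebra

lemma qform_resultant_nonzero:
  assumes "\<And>x y. x \<noteq> 0 \<or> y \<noteq> 0 \<Longrightarrow> qform p2 p1 p0 x y \<noteq> 0 \<or> qform q2 q1 q0 x y \<noteq> 0"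
  shows "qform_resultant p2 p1 p0 q2 q1 q0 \<noteq> 0"
proof
  assume res: "qform_resultant p2 p1 p0 q2 q1 q0 = 0"
  obtain u v s t where q: "q2 = u * s" "q1 = u * t + v * s" "q0 = v * t"
    by (rule qform_factor)
  have Q: "qform q2 q1 q0 x y = (u * x + v * y) * (s * x + t * y)" for x y
    by (simp add: q qform_product)
  show False
  proof (cases "(u = 0 \<and> v = 0) \<or> (s = 0 \<and> t = 0)")
    case True
    then have "qform q2 q1 q0 x y = 0" for x y by (auto simp: Q)
    with assms qform_has_zero show False by metis
  next
    case False
    have "qform p2 p1 p0 (- v) u = 0 \<or> qform p2 p1 p0 (- t) s = 0"
      using res by (simp add: q qform_resultant_product)
    moreover have "qform q2 q1 q0 (- v) u = 0" "qform q2 q1 q0 (- t) s = 0"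
      by (simp_all add: Q algebra_simps)
    ultimately show False
      using False assms[of "- v" u] assms[of "- t" s] by auto
  qed
qed

text \<open>The discriminant of the member \<open>\<alpha> P - \<beta> Q\<close> of the pencil spanned by two quadratic forms
  is a quadratic form in \<open>(\<alpha>, \<beta>)\<close> whose discriminant is 16 times their resultant; so if the
  resultant does not vanish, the pencil contains exactly two degenerate members, which are squares
  of independent linear forms.\<close>
lemma pencil_two_squares:
  assumes "\<And>x y. x \<noteq> 0 \<or> y \<noteq> 0 \<Longrightarrow> qform p2 p1 p0 x y \<noteq> 0 \<or> qform q2 q1 q0 x y \<noteq> 0"
  obtains \<alpha>1 \<beta>1 \<alpha>2 \<beta>2 e1 f1 e2 f2 where "\<alpha>2 * \<beta>1 - \<alpha>1 * \<beta>2 \<noteq> 0"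
    "\<And>x y. \<alpha>1 * qform p2 p1 p0 x y - \<beta>1 * qform q2 q1 q0 x y = (e1 * x + f1 * y)^2"
    "\<And>x y. \<alpha>2 * qform p2 p1 p0 x y - \<beta>2 * qform q2 q1 q0 x y = (e2 * x + f2 * y)^2"
proof -
  define D2 where "D2 = p1^2 - 4 * p2 * p0"
  define D1 where "D1 = 4 * p2 * q0 + 4 * q2 * p0 - 2 * p1 * q1"
  define D0 where "D0 = q1^2 - 4 * q2 * q0"
  have disc: "(\<alpha> * p1 - \<beta> * q1)^2 - 4 * (\<alpha> * p2 - \<beta> * q2) * (\<alpha> * p0 - \<beta> * q0) = qform D2 D1 D0 \<alpha> \<beta>"
    for \<alpha> \<beta> unfolding qform_def D2_def D1_def D0_def by algebra
  have pencil: "qform (\<alpha> * p2 - \<beta> * q2) (\<alpha> * p1 - \<beta> * q1) (\<alpha> * p0 - \<beta> * q0) x y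
      = \<alpha> * qform p2 p1 p0 x y - \<beta> * qform q2 q1 q0 x y" for \<alpha> \<beta> x y
    unfolding qform_def by algebra
  have square: "\<exists>e f. \<forall>x y. \<alpha> * qform p2 p1 p0 x y - \<beta> * qform q2 q1 q0 x y = (e * x + f * y)^2"
    if "qform D2 D1 D0 \<alpha> \<beta> = 0" for \<alpha> \<beta>
    using that disc[of \<alpha> \<beta>] pencil
    by (metis (no_types, lifting) eq_iff_diff_eq_0 qform_square_if_disc_zero)
  obtain u v s t where D: "D2 = u * s" "D1 = u * t + v * s" "D0 = v * t"
    by (rule qform_factor)
  have "(u * t - v * s)^2 = 16 * qform_resultant p2 p1 p0 q2 q1 q0"
    using D unfolding D2_def D1_def D0_def qform_resultant_def by algebra
  then have "(- t) * u - (- v) * s \<noteq> 0"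
    using qform_resultant_nonzero[OF assms] by (auto simp: algebra_simps)
  moreover have "qform D2 D1 D0 (- v) u = 0" "qform D2 D1 D0 (- t) s = 0"
    by (simp_all add: D qform_product algebra_simps)
  ultimately show thesis
    using that square by metis
qed

lemma linear_forms_common_zero:
  assumes "e1 * f2 - f1 * e2 = (0::complex)"
  obtains x y where "x \<noteq> 0 \<or> y \<noteq> 0" "e1 * x + f1 * y = 0" "e2 * x + f2 * y = 0"
proof (cases "e1 = 0 \<and> f1 = 0")
  case True
  with that[of 1 0] that[of "- f2" e2] show ?thesis by (auto simp: algebra_simps)
next
  case False
  with assms that[of "- f1" e1] show ?thesis by (auto simp: algebra_simps)
qed

lemma qform_pair_normal_form:
  assumes "\<And>x y. x \<noteq> 0 \<or> y \<noteq> 0 \<Longrightarrow> qform p2 p1 p0 x y \<noteq> 0 \<or> qform q2 q1 q0 x y \<noteq> 0"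
  obtains a b c d n1 n2 n3 n4 where "a * d - b * c \<noteq> 0" "n1 * n4 - n2 * n3 \<noteq> 0"
    "\<And>x y. qform p2 p1 p0 x y = n1 * (a * x + b * y)^2 + n2 * (c * x + d * y)^2"
    "\<And>x y. qform q2 q1 q0 x y = n3 * (a * x + b * y)^2 + n4 * (c * x + d * y)^2"
proof -
  obtain \<alpha>1 \<beta>1 \<alpha>2 \<beta>2 e1 f1 e2 f2 where "\<alpha>2 * \<beta>1 - \<alpha>1 * \<beta>2 \<noteq> 0"
    and L1: "\<And>x y. \<alpha>1 * qform p2 p1 p0 x y - \<beta>1 * qform q2 q1 q0 x y = (e1 * x + f1 * y)^2"
    and L2: "\<And>x y. \<alpha>2 * qform p2 p1 p0 x y - \<beta>2 * qform q2 q1 q0 x y = (e2 * x + f2 * y)^2"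
    using pencil_two_squares[OF assms] by metis
  define \<Delta> where "\<Delta> = \<alpha>2 * \<beta>1 - \<alpha>1 * \<beta>2"
  from \<open>\<alpha>2 * \<beta>1 - \<alpha>1 * \<beta>2 \<noteq> 0\<close> have "\<Delta> \<noteq> 0" by (simp add: \<Delta>_def)
  have P: "\<Delta> * qform p2 p1 p0 x y = \<beta>1 * (e2 * x + f2 * y)^2 - \<beta>2 * (e1 * x + f1 * y)^2"
    and Q: "\<Delta> * qform q2 q1 q0 x y = \<alpha>1 * (e2 * x + f2 * y)^2 - \<alpha>2 * (e1 * x + f1 * y)^2"
    for x y
    unfolding L1[symmetric] L2[symmetric] \<Delta>_def by (simp_all add: algebra_simps)
  have "e1 * f2 - f1 * e2 \<noteq> 0"
  proof
    assume "e1 * f2 - f1 * e2 = 0"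
    then obtain x y where "x \<noteq> 0 \<or> y \<noteq> 0" "e1 * x + f1 * y = 0" "e2 * x + f2 * y = 0"
      by (rule linear_forms_common_zero)
    with P[of x y] Q[of x y] assms[of x y] \<open>\<Delta> \<noteq> 0\<close> show False by simp
  qed
  moreover have "(- \<beta>2 / \<Delta>) * (\<alpha>1 / \<Delta>) - (\<beta>1 / \<Delta>) * (- \<alpha>2 / \<Delta>) = \<Delta> / (\<Delta> * \<Delta>)"
    by (simp add: \<Delta>_def diff_divide_distrib mult.commute)
  then have "(- \<beta>2 / \<Delta>) * (\<alpha>1 / \<Delta>) - (\<beta>1 / \<Delta>) * (- \<alpha>2 / \<Delta>) \<noteq> 0"
    using \<open>\<Delta> \<noteq> 0\<close> by simp
  moreover have "qform p2 p1 p0 x y = (- \<beta>2 / \<Delta>) * (e1 * x + f1 * y)^2 + (\<beta>1 / \<Delta>) * (e2 * x + f2 * y)^2"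
    and "qform q2 q1 q0 x y = (- \<alpha>2 / \<Delta>) * (e1 * x + f1 * y)^2 + (\<alpha>1 / \<Delta>) * (e2 * x + f2 * y)^2"
    for x y
    using P[of x y] Q[of x y] \<open>\<Delta> \<noteq> 0\<close> by (simp_all add: field_simps)
  ultimately show thesis
    using that by blast
qed

section \<open>Quadratic maps\<close>

lemma rat_eval_quadratic:
  assumes "q \<noteq> 0" "max (degree p) (degree q) = 2"
  shows "rat_eval p q w = sphere_of (qform (coeff p 2) (coeff p 1) (coeff p 0) (hx w) (hy w))
                                    (qform (coeff q 2) (coeff q 1) (coeff q 0) (hx w) (hy w))"
  unfolding rat_eval_homogeneous[OF assms] hom_poly_2 qform_def by (simp add: algebra_simps)

lemma sq_map_hcoords: "sq_map w = sphere_of ((hx w)^2) ((hy w)^2)"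
  unfolding sq_map_def by (subst rat_eval_quadratic) (simp_all add: qform_def numeral_2_eq_2)

lemma sq_map_sphere_of: "x \<noteq> 0 \<or> y \<noteq> 0 \<Longrightarrow> sq_map (sphere_of x y) = sphere_of (x^2) (y^2)"
  unfolding sq_map_hcoords
  by (rule homogeneous_map_sphere_of[where d = 2]) (simp_all add: power_mult_distrib)

lemma sq_map_Some [simp]: "sq_map (Some z) = Some (z^2)"
  using sq_map_sphere_of[of z 1] by (simp add: sphere_of_def)

lemma sq_map_None [simp]: "sq_map None = None"
  using sq_map_sphere_of[of 1 0] by (simp add: sphere_of_def)

definition recip :: "sphere \<Rightarrow> sphere" where
  "recip = mobius_map 0 1 1 0"

lemma recip_sphere_of: "x \<noteq> 0 \<or> y \<noteq> 0 \<Longrightarrow> recip (sphere_of x y) = sphere_of y x"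
  by (simp add: recip_def mobius_map_sphere_of)

lemma inv_sq_map_eq_recip_sq_map: "inv_sq_map = recip \<circ> sq_map"
proof
  fix w
  have "inv_sq_map w = sphere_of ((hy w)^2) ((hx w)^2)"
    unfolding inv_sq_map_def by (subst rat_eval_quadratic) (simp_all add: qform_def numeral_2_eq_2)
  also have "\<dots> = recip (sq_map w)"
    using hcoords_nonzero[of w] by (simp add: sq_map_hcoords recip_sphere_of)
  finally show "inv_sq_map w = (recip \<circ> sq_map) w" by simp
qed

lemma quadratic_map_qform:
  assumes "quadratic_map f"
  obtains p2 p1 p0 q2 q1 q0 where
    "\<And>x y. x \<noteq> 0 \<or> y \<noteq> 0 \<Longrightarrow> qform p2 p1 p0 x y \<noteq> 0 \<or> qform q2 q1 q0 x y \<noteq> 0"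
    "\<And>w. f w = sphere_of (qform p2 p1 p0 (hx w) (hy w)) (qform q2 q1 q0 (hx w) (hy w))"
proof -
  obtain p q where pq: "q \<noteq> 0" "coprime p q" "max (degree p) (degree q) = 2" "f = rat_eval p q"
    using assms by (auto simp: quadratic_map_def rational_map_deg_def)
  have dehom: "qform (coeff r 2) (coeff r 1) (coeff r 0) x y = y^2 * poly r (x / y)"
    if "y \<noteq> 0" "degree r \<le> 2" for r x y
    using that hom_poly_affine[OF that(2), of "x / y"]
    by (simp add: hom_poly_2 qform_def field_simps power2_eq_square)
  have "qform (coeff p 2) (coeff p 1) (coeff p 0) x y \<noteq> 0 \<or> qform (coeff q 2) (coeff q 1) (coeff q 0) x y \<noteq> 0"
    if "x \<noteq> 0 \<or> y \<noteq> 0" for x y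
  proof (cases "y = 0")
    case False
    with pq(3) dehom[of y p x] dehom[of y q x] coprime_poly_0[OF pq(2), of "x / y"] show ?thesis
      by auto
  next
    case True
    have "coeff p 2 \<noteq> 0 \<or> coeff q 2 \<noteq> 0"
      using pq(3) by (metis leading_coeff_0_iff max_def zero_neq_numeral degree_0)
    with True that show ?thesis by (auto simp: qform_def)
  qed
  moreover have "f w = sphere_of (qform (coeff p 2) (coeff p 1) (coeff p 0) (hx w) (hy w))
                                 (qform (coeff q 2) (coeff q 1) (coeff q 0) (hx w) (hy w))" for w
    using rat_eval_quadratic[OF pq(1,3)] pq(4) by simp
  ultimately show thesis by (rule that)
qed

theorem quadratic_map_decomposition:
  assumes "quadratic_map f"
  obtains M N where "moebius M" "moebius N" "f = N \<circ> sq_map \<circ> M"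
proof -
  obtain p2 p1 p0 q2 q1 q0 where
    nc: "\<And>x y. x \<noteq> 0 \<or> y \<noteq> 0 \<Longrightarrow> qform p2 p1 p0 x y \<noteq> 0 \<or> qform q2 q1 q0 x y \<noteq> 0" and
    f: "\<And>w. f w = sphere_of (qform p2 p1 p0 (hx w) (hy w)) (qform q2 q1 q0 (hx w) (hy w))"
    using quadratic_map_qform[OF assms] by metis
  obtain a b c d n1 n2 n3 n4 where det: "a * d - b * c \<noteq> 0" "n1 * n4 - n2 * n3 \<noteq> 0"
    and P: "\<And>x y. qform p2 p1 p0 x y = n1 * (a * x + b * y)^2 + n2 * (c * x + d * y)^2"
    and Q: "\<And>x y. qform q2 q1 q0 x y = n3 * (a * x + b * y)^2 + n4 * (c * x + d * y)^2"
    using qform_pair_normal_form[OF nc] by metis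
  have "f w = (mobius_map n1 n2 n3 n4 \<circ> sq_map \<circ> mobius_map a b c d) w" for w
  proof -
    define u v where "u = a * hx w + b * hy w" and "v = c * hx w + d * hy w"
    have "u \<noteq> 0 \<or> v \<noteq> 0"
      using linear_map_nonzero[OF det(1) hcoords_nonzero] by (simp add: u_def v_def)
    have "f w = sphere_of (n1 * u^2 + n2 * v^2) (n3 * u^2 + n4 * v^2)"
      unfolding f P Q u_def v_def ..
    also have "\<dots> = mobius_map n1 n2 n3 n4 (sq_map (sphere_of u v))"
      using \<open>u \<noteq> 0 \<or> v \<noteq> 0\<close> by (simp add: sq_map_sphere_of mobius_map_sphere_of)
    also have "sphere_of u v = mobius_map a b c d w"
      unfolding mobius_map_def u_def v_def ..
    finally show ?thesis by simp
  qed
  then show thesis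
    using that moebius_mobius_map[OF det(1)] moebius_mobius_map[OF det(2)] by blast
qed

section \<open>Conjugation by Moebius maps\<close>

lemma funpow_conj:
  assumes "\<And>x. A (B x) = x" "\<And>x. B (A x) = x"
  shows "(A \<circ> g \<circ> B) ^^ n = A \<circ> g ^^ n \<circ> B"
  by (induction n) (simp_all add: fun_eq_iff assms)

lemma Deck_conj:
  assumes AB: "\<And>x. A (B x) = x" and BA: "\<And>x. B (A x) = x"
    and "moebius A" "moebius B"
  shows "Deck (A \<circ> F \<circ> B) = (\<lambda>\<tau>. A \<circ> \<tau> \<circ> B) ` Deck F"
proof
  show "Deck (A \<circ> F \<circ> B) \<subseteq> (\<lambda>\<tau>. A \<circ> \<tau> \<circ> B) ` Deck F"
  proof
    fix \<sigma> assume "\<sigma> \<in> Deck (A \<circ> F \<circ> B)"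
    then have "moebius (B \<circ> \<sigma> \<circ> A)" "F \<circ> (B \<circ> \<sigma> \<circ> A) = F"
      using assms by (auto simp: Deck_def fun_eq_iff intro!: moebius_comp) (metis BA)
    moreover have "\<sigma> = A \<circ> (B \<circ> \<sigma> \<circ> A) \<circ> B" by (simp add: fun_eq_iff AB)
    ultimately show "\<sigma> \<in> (\<lambda>\<tau>. A \<circ> \<tau> \<circ> B) ` Deck F" by (auto simp: Deck_def)
  qed
  show "(\<lambda>\<tau>. A \<circ> \<tau> \<circ> B) ` Deck F \<subseteq> Deck (A \<circ> F \<circ> B)"
    using assms by (auto simp: Deck_def fun_eq_iff intro!: moebius_comp)
qed

lemma cyclic_order_gt2_conj:
  assumes AB: "\<And>x. A (B x) = x" and BA: "\<And>x. B (A x) = x"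
    and "cyclic_order_gt2 G"
  shows "cyclic_order_gt2 ((\<lambda>\<tau>. A \<circ> \<tau> \<circ> B) ` G)"
proof -
  obtain g where g: "g \<in> G" "G = {g ^^ n | n. True}" and "finite G" "card G > 2"
    using assms(3) by (auto simp: cyclic_order_gt2_def)
  have "inj (\<lambda>\<tau>. A \<circ> \<tau> \<circ> B)"
    by (rule injI) (metis (no_types, lifting) AB BA comp_apply ext)
  then have "card ((\<lambda>\<tau>. A \<circ> \<tau> \<circ> B) ` G) = card G"
    by (simp add: card_image inj_on_subset)
  moreover have "(\<lambda>\<tau>. A \<circ> \<tau> \<circ> B) ` G = {(A \<circ> g \<circ> B) ^^ n | n. True}"
    using g(2) by (auto simp: funpow_conj[OF AB BA])
  moreover have "finite ((\<lambda>\<tau>. A \<circ> \<tau> \<circ> B) ` G)" "A \<circ> g \<circ> B \<in> (\<lambda>\<tau>. A \<circ> \<tau> \<circ> B) ` G"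
    using \<open>finite G\<close> g(1) by simp_all
  ultimately show ?thesis
    using \<open>card G > 2\<close> unfolding cyclic_order_gt2_def by auto
qed

lemma power_map_conj:
  assumes "\<And>x. B (A x) = x" "moebius A" "power_map h"
  shows "power_map (A \<circ> h \<circ> B)"
proof -
  obtain \<mu> where "moebius \<mu>" "h \<circ> \<mu> = \<mu> \<circ> sq_map \<or> h \<circ> \<mu> = \<mu> \<circ> inv_sq_map"
    using assms(3) by (auto simp: power_map_def)
  moreover have "A \<circ> h \<circ> B \<circ> (A \<circ> \<mu>) = A \<circ> (h \<circ> \<mu>)"
    by (simp add: fun_eq_iff assms(1))
  ultimately show ?thesis
    using moebius_comp[OF assms(2)] unfolding power_map_def by (metis comp_assoc)
qed

lemma cyclic_order_gt2_Deck_conj: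
  assumes "moebius A" "moebius B" "\<And>x. A (B x) = x" "\<And>x. B (A x) = x"
    and "cyclic_order_gt2 (Deck (h ^^ k))"
  shows "cyclic_order_gt2 (Deck ((A \<circ> h \<circ> B) ^^ k))"
  unfolding funpow_conj[OF assms(3,4)] Deck_conj[OF assms(3,4,1,2)]
  by (rule cyclic_order_gt2_conj[OF assms(3-5)])

section \<open>Scalings and the deck group of z^4\<close>

definition scaling :: "complex \<Rightarrow> sphere \<Rightarrow> sphere" where
  "scaling t = mobius_map t 0 0 1"

lemma scaling_Some [simp]: "scaling t (Some z) = Some (t * z)"
  by (simp add: scaling_def mobius_map_Some sphere_of_def)

lemma scaling_None [simp]: "scaling t None = None"
  by (simp add: scaling_def mobius_map_None sphere_of_def)

lemma scaling_1: "scaling 1 = id"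
proof
  fix w show "scaling 1 w = id w" by (cases w) simp_all
qed

lemma scaling_comp: "scaling s \<circ> scaling t = scaling (s * t)"
proof
  fix w show "(scaling s \<circ> scaling t) w = scaling (s * t) w" by (cases w) simp_all
qed

lemma scaling_funpow: "scaling t ^^ n = scaling (t ^ n)"
  by (induction n) (simp_all add: scaling_1 scaling_comp)

lemma moebius_scaling: "t \<noteq> 0 \<Longrightarrow> moebius (scaling t)"
  unfolding scaling_def by (rule moebius_mobius_map) simp

lemma inj_scaling: "inj scaling"
proof (rule injI)
  fix s t assume "scaling s = scaling t"
  then have "scaling s (Some 1) = scaling t (Some 1)" by simp
  then show "s = t" by simp
qed

lemma scaling_fixed_point:
  assumes "s \<noteq> 1" "scaling s w = w"
  shows "w = Some 0 \<or> w = None"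
  using assms by (cases w) auto

lemma sq_map_scaling: "sq_map \<circ> scaling t = scaling (t^2) \<circ> sq_map"
proof
  fix w show "(sq_map \<circ> scaling t) w = (scaling (t^2) \<circ> sq_map) w"
    by (cases w) (simp_all add: power_mult_distrib)
qed

lemma recip_Some: "recip (Some z) = (if z = 0 then None else Some (1 / z))"
  by (simp add: recip_def mobius_map_Some sphere_of_def)

lemma recip_None: "recip None = Some 0"
  by (simp add: recip_def mobius_map_None sphere_of_def)

lemma recip_recip: "recip (recip w) = w"
  by (cases w) (simp_all add: recip_Some recip_None)

lemma sq_map_recip: "sq_map (recip w) = recip (sq_map w)"
  by (cases w) (simp_all add: recip_Some recip_None power_one_over)

lemma moebius_fixing_zero_infinity:
  assumes "moebius M" "M (Some 0) = Some 0" "M None = None"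
  obtains t where "t \<noteq> 0" "M = scaling t"
proof -
  obtain a b c d where det: "a * d - b * c \<noteq> 0" and M: "M = mobius_map a b c d"
    using assms(1) by (auto simp: moebius_iff_mobius_map)
  have "d \<noteq> 0" "b = 0" "c = 0"
    using assms(2,3) by (auto simp: M mobius_map_Some mobius_map_None sphere_of_def split: if_splits)
  moreover from this det have "a \<noteq> 0" by simp
  moreover have "M = scaling (a / d)"
  proof
    fix w show "M w = scaling (a / d) w"
      using calculation by (cases w) (simp_all add: M mobius_map_Some mobius_map_None sphere_of_def)
  qed
  ultimately show thesis
    using that[of "a / d"] by auto
qed

lemma moebius_swapping_zero_infinity:
  assumes "moebius M" "M (Some 0) = None" "M None = Some 0"
  obtains t where "t \<noteq> 0" "M = scaling t \<circ> recip"
proof -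
  obtain a b c d where det: "a * d - b * c \<noteq> 0" and M: "M = mobius_map a b c d"
    using assms(1) by (auto simp: moebius_iff_mobius_map)
  have "d = 0" "a = 0" "c \<noteq> 0"
    using assms(2,3) by (auto simp: M mobius_map_Some mobius_map_None sphere_of_def split: if_splits)
  moreover from this det have "b \<noteq> 0" by simp
  moreover have "M = scaling (b / c) \<circ> recip"
  proof
    fix w show "M w = (scaling (b / c) \<circ> recip) w"
      using calculation
      by (cases w) (simp_all add: M mobius_map_Some mobius_map_None sphere_of_def recip_Some recip_None)
  qed
  ultimately show thesis
    using that[of "b / c"] by auto
qed

lemma moebius_intertwining_scaling:
  assumes "moebius M" "s \<noteq> 1" "scaling s \<circ> M = M \<circ> \<psi>" "\<psi> (Some 0) = Some 0" "\<psi> None = None"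
  shows "(\<exists>t. t \<noteq> 0 \<and> M = scaling t) \<or> (\<exists>t. t \<noteq> 0 \<and> M = scaling t \<circ> recip)"
proof -
  have "scaling s (M w) = M w" if "\<psi> w = w" for w
    using fun_cong[OF assms(3), of w] that by simp
  then have 0: "M (Some 0) = Some 0 \<or> M (Some 0) = None" and \<infinity>: "M None = Some 0 \<or> M None = None"
    using scaling_fixed_point[OF assms(2)] assms(4,5) by presburger+
  have "M (Some 0) \<noteq> M None"
    using moebius_inj[OF assms(1)] by blast
  then consider "M (Some 0) = Some 0" "M None = None" | "M (Some 0) = None" "M None = Some 0"
    using 0 \<infinity> by fastforce
  then show ?thesis
  proof cases
    case 1
    then show ?thesis using moebius_fixing_zero_infinity[OF assms(1)] by blast
  next
    case 2
    then show ?thesis using moebius_swapping_zero_infinity[OF assms(1)] by blast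
  qed
qed

lemma fourth_roots_of_unity: "(t::complex)^4 = 1 \<longleftrightarrow> t \<in> {1, \<i>, -1, -\<i>}"
proof -
  have "t^4 - 1 = (t - 1) * (t + 1) * (t - \<i>) * (t + \<i>)"
    by (simp add: algebra_simps eval_nat_numeral)
  then show ?thesis
    by (auto simp: add_eq_0_iff2 eval_nat_numeral)
qed

lemma sq_map_funpow_2: "(sq_map ^^ 2) w = map_option (\<lambda>z. z^4) w"
  by (cases w) (simp_all add: eval_nat_numeral)

lemma Deck_sq_map_funpow_2: "Deck (sq_map ^^ 2) = scaling ` {1, \<i>, -1, -\<i>}"
proof
  show "Deck (sq_map ^^ 2) \<subseteq> scaling ` {1, \<i>, -1, -\<i>}"
  proof
    fix \<tau> assume "\<tau> \<in> Deck (sq_map ^^ 2)"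
    then have "moebius \<tau>" and inv: "\<And>w. map_option (\<lambda>z. z^4) (\<tau> w) = map_option (\<lambda>z. z^4) w"
      by (auto simp: Deck_def fun_eq_iff sq_map_funpow_2)
    have "\<tau> (Some 0) = Some 0" "\<tau> None = None"
      using inv[of "Some 0"] inv[of None] by auto
    then obtain t where "\<tau> = scaling t"
      using moebius_fixing_zero_infinity[OF \<open>moebius \<tau>\<close>] by metis
    moreover have "t^4 = 1"
      using inv[of "Some 1"] by (simp add: \<open>\<tau> = scaling t\<close>)
    ultimately show "\<tau> \<in> scaling ` {1, \<i>, -1, -\<i>}"
      using fourth_roots_of_unity by blast
  qed
  show "scaling ` {1, \<i>, -1, -\<i>} \<subseteq> Deck (sq_map ^^ 2)"
  proof
    fix \<tau> assume "\<tau> \<in> scaling ` {1, \<i>, -1, -\<i>}"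
    then obtain t where t: "t^4 = 1" and \<tau>: "\<tau> = scaling t"
      by (auto simp: fourth_roots_of_unity)
    then have "t \<noteq> 0" by auto
    moreover have "(sq_map ^^ 2) (scaling t w) = (sq_map ^^ 2) w" for w
      using t by (cases w) (simp_all add: sq_map_funpow_2 power_mult_distrib)
    ultimately show "\<tau> \<in> Deck (sq_map ^^ 2)"
      by (simp add: \<tau> Deck_def moebius_scaling fun_eq_iff)
  qed
qed

lemma cyclic_order_gt2_Deck_sq_map: "cyclic_order_gt2 (Deck (sq_map ^^ 2))"
proof -
  have "{\<i> ^ n | n. True} = {1, \<i>, -1, -\<i>}"
  proof
    have "(\<i> ^ n) ^ 4 = (\<i> ^ 4) ^ n" for n
      by (simp only: power_mult[symmetric] mult.commute)
    then show "{\<i> ^ n | n. True} \<subseteq> {1, \<i>, -1, -\<i>}"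
      using fourth_roots_of_unity by auto
    show "{1, \<i>, -1, -\<i>} \<subseteq> {\<i> ^ n | n. True}"
      by (auto intro: exI[of _ 0] exI[of _ 1] exI[of _ 2] exI[of _ 3] simp: eval_nat_numeral)
  qed
  moreover have "{scaling (\<i> ^ n) | n. True} = scaling ` {\<i> ^ n | n. True}" by blast
  ultimately have "Deck (sq_map ^^ 2) = {scaling \<i> ^^ n | n. True}"
    unfolding Deck_sq_map_funpow_2 scaling_funpow by simp
  moreover have "finite (Deck (sq_map ^^ 2))" "card (Deck (sq_map ^^ 2)) = 4"
    unfolding Deck_sq_map_funpow_2
    by (simp, subst card_image[OF inj_on_subset[OF inj_scaling]]) (auto simp: complex_eq_iff)
  moreover have "scaling \<i> \<in> Deck (sq_map ^^ 2)"
    unfolding Deck_sq_map_funpow_2 by simp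
  ultimately show ?thesis
    unfolding cyclic_order_gt2_def by (intro conjI bexI[of _ "scaling \<i>"]) simp_all
qed

lemma inv_sq_map_funpow_2: "inv_sq_map ^^ 2 = sq_map ^^ 2"
  by (simp add: fun_eq_iff inv_sq_map_eq_recip_sq_map sq_map_recip recip_recip eval_nat_numeral)

theorem power_map_cyclic_Deck:
  assumes "power_map f"
  shows "cyclic_order_gt2 (Deck (f ^^ 2))"
proof -
  obtain \<mu> s where "moebius \<mu>" and f\<mu>: "f \<circ> \<mu> = \<mu> \<circ> s" and "s ^^ 2 = sq_map ^^ 2"
    using assms inv_sq_map_funpow_2 unfolding power_map_def by blast
  obtain \<mu>' where "moebius \<mu>'" "\<And>x. \<mu> (\<mu>' x) = x" "\<And>x. \<mu>' (\<mu> x) = x"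
    using moebius_inverse[OF \<open>moebius \<mu>\<close>] by metis
  moreover from this have "f = \<mu> \<circ> s \<circ> \<mu>'"
    using f\<mu> by (metis comp_apply ext)
  ultimately show ?thesis
    using cyclic_order_gt2_Deck_conj[OF \<open>moebius \<mu>\<close>, where B = \<mu>' and h = s and k = 2] cyclic_order_gt2_Deck_sq_map
      \<open>s ^^ 2 = sq_map ^^ 2\<close> by simp
qed

section \<open>Cyclic deck groups of quadratic maps\<close>

lemma card_orbit_involution:
  assumes "\<And>x. g (g x) = x"
  shows "card {g ^^ n | n. True} \<le> 2"
proof -
  have "g ^^ n \<in> {id, g}" for n
    by (induction n) (auto simp: fun_eq_iff assms)
  then have "{g ^^ n | n. True} \<subseteq> {id, g}" by blast
  then have "card {g ^^ n | n. True} \<le> card {id, g}" by (rule card_mono[rotated]) simp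
  also have "\<dots> \<le> 2" by (simp add: card_insert_if)
  finally show ?thesis .
qed

lemma scaling_recip_involution: "(scaling t \<circ> recip) ((scaling t \<circ> recip) w) = w" if "t \<noteq> 0"
  using that by (cases w) (simp_all add: recip_Some recip_None)

lemma cyclic_generator_scaling:
  assumes "scaling (-1) \<in> {g ^^ n | n. True}" "card {g ^^ n | n. True} > 2" "moebius g"
  shows "\<exists>t. t \<noteq> 0 \<and> t^2 \<noteq> 1 \<and> g = scaling t"
proof -
  have not_invol: "\<not> (\<forall>x. g (g x) = x)"
    using card_orbit_involution assms(2) by force
  obtain m where "scaling (-1) = g ^^ m" using assms(1) by blast
  then have "scaling (-1) \<circ> g = g \<circ> scaling (-1)"
    by (simp add: funpow_swap1 fun_eq_iff)
  then have "(\<exists>t. t \<noteq> 0 \<and> g = scaling t) \<or> (\<exists>t. t \<noteq> 0 \<and> g = scaling t \<circ> recip)"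
    by (intro moebius_intertwining_scaling[OF assms(3), of "-1" "scaling (-1)"]) simp_all
  then obtain t where "t \<noteq> 0" "g = scaling t"
    using not_invol scaling_recip_involution by metis
  moreover have "t^2 \<noteq> 1"
  proof
    assume "t^2 = 1"
    then have "g (g x) = x" for x
      using fun_cong[OF scaling_comp[of t t], of x] by (simp add: \<open>g = scaling t\<close> power2_eq_square scaling_1)
    with not_invol show False by blast
  qed
  ultimately show ?thesis by blast
qed

lemma Deck_id: "Deck (f ^^ 0) \<subseteq> {id}"
  by (auto simp: Deck_def)

lemma Deck_funpow_mono:
  assumes "m \<le> n"
  shows "Deck (f ^^ m) \<subseteq> Deck (f ^^ n)"
proof -
  have "f ^^ n = f ^^ (n - m) \<circ> f ^^ m"
    using assms by (simp add: funpow_add[symmetric])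
  then show ?thesis
    by (auto simp: Deck_def comp_assoc)
qed

lemma Deck_semiconj:
  assumes "surj h" "h \<circ> g = \<phi> \<circ> h" "moebius \<phi>" "g \<in> Deck (h ^^ Suc n)"
  shows "\<phi> \<in> Deck (h ^^ n)"
proof -
  have "(h ^^ n) (\<phi> y) = (h ^^ n) y" for y
  proof -
    obtain x where "y = h x" using assms(1) by (metis surjD)
    have "(h ^^ n) (\<phi> (h x)) = (h ^^ Suc n) (g x)"
      using fun_cong[OF assms(2), of x] by (simp add: funpow_Suc_right del: funpow.simps)
    also have "\<dots> = (h ^^ Suc n) x"
      using assms(4) by (simp add: Deck_def fun_eq_iff)
    finally show ?thesis by (simp add: \<open>y = h x\<close> funpow_Suc_right del: funpow.simps)
  qed
  with assms(3) show ?thesis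
    by (simp add: Deck_def fun_eq_iff)
qed

lemma surj_sq_map: "surj sq_map"
proof (rule surjI)
  fix w show "sq_map (map_option csqrt w) = w" by (cases w) simp_all
qed

lemma complex_root_exists: "n > 0 \<Longrightarrow> \<exists>r::complex. r ^ n = u"
proof (cases "u = 0")
  case False
  assume "n > 0"
  then have "exp (Ln u / of_nat n) ^ n = exp (Ln u)"
    by (simp add: exp_of_nat_mult[symmetric])
  with False show ?thesis by auto
qed simp

lemma power_map_scaling_sq_map:
  assumes "t \<noteq> 0"
  shows "power_map (scaling t \<circ> sq_map)"
proof -
  have "scaling t \<circ> sq_map \<circ> scaling (1 / t) = scaling (1 / t) \<circ> sq_map"
    by (rule ext, case_tac x) (simp_all add: assms power2_eq_square)
  then show ?thesis
    unfolding power_map_def using moebius_scaling[of "1 / t"] assms by auto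
qed

lemma power_map_scaling_inv_sq_map:
  assumes "t \<noteq> 0"
  shows "power_map (scaling t \<circ> inv_sq_map)"
proof -
  obtain r where r: "r ^ 3 = t" using complex_root_exists[of 3 t] by auto
  with assms have "r \<noteq> 0" by auto
  have "scaling t \<circ> inv_sq_map \<circ> scaling r = scaling r \<circ> inv_sq_map"
    by (rule ext, case_tac x)
       (simp_all add: inv_sq_map_eq_recip_sq_map recip_Some recip_None \<open>r \<noteq> 0\<close> r[symmetric]
          field_simps power2_eq_square power3_eq_cube)
  then show ?thesis
    unfolding power_map_def using moebius_scaling[OF \<open>r \<noteq> 0\<close>] by auto
qed

lemma power_map_comp_sq_map:
  assumes "(\<exists>c. c \<noteq> 0 \<and> M = scaling c) \<or> (\<exists>c. c \<noteq> 0 \<and> M = scaling c \<circ> recip)"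
  shows "power_map (M \<circ> sq_map)"
  using assms
proof (elim disjE exE conjE)
  fix c assume "c \<noteq> 0" "M = scaling c"
  then show ?thesis using power_map_scaling_sq_map by simp
next
  fix c assume "c \<noteq> 0" "M = scaling c \<circ> recip"
  then show ?thesis using power_map_scaling_inv_sq_map[of c]
    by (simp add: inv_sq_map_eq_recip_sq_map comp_assoc)
qed

lemma cyclic_Deck_even_map:
  assumes even: "h \<circ> scaling (-1) = h" and cyc: "cyclic_order_gt2 (Deck (h ^^ k))"
  obtains t where "k \<noteq> 0" "t \<noteq> 0" "t^2 \<noteq> 1" "Deck (h ^^ k) = {scaling (t ^ n) | n. True}"
proof -
  obtain g where "g \<in> Deck (h ^^ k)" and G: "Deck (h ^^ k) = {g ^^ n | n. True}"
    and card: "card (Deck (h ^^ k)) > 2"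
    using cyc unfolding cyclic_order_gt2_def by blast
  have "k \<noteq> 0"
  proof
    assume "k = 0"
    then have "card (Deck (h ^^ k)) \<le> card {id :: sphere \<Rightarrow> sphere}"
      using Deck_id by (intro card_mono) auto
    with card show False by simp
  qed
  then have "scaling (-1) \<in> Deck (h ^^ k)"
    using even by (cases k) (simp_all add: Deck_def moebius_scaling funpow_Suc_right comp_assoc
        del: funpow.simps)
  moreover have "moebius g"
    using \<open>g \<in> Deck (h ^^ k)\<close> by (simp add: Deck_def)
  ultimately obtain t where "t \<noteq> 0" "t^2 \<noteq> 1" "g = scaling t"
    using cyclic_generator_scaling[of g] G card by auto
  with \<open>k \<noteq> 0\<close> show thesis
    by (intro that[of t]) (simp_all add: G scaling_funpow)
qed

theorem power_map_if_cyclic_Deck: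
  assumes "moebius M" and h: "h = M \<circ> sq_map" and cyc: "cyclic_order_gt2 (Deck (h ^^ k))"
  shows "power_map h"
proof -
  have "h \<circ> scaling (-1) = h"
    by (simp add: h comp_assoc sq_map_scaling scaling_1)
  then obtain t where "k \<noteq> 0" "t \<noteq> 0" "t^2 \<noteq> 1" and G: "Deck (h ^^ k) = {scaling (t ^ n) | n. True}"
    by (rule cyclic_Deck_even_map[OF _ cyc])
  obtain M' where "moebius M'" and MM': "\<And>x. M (M' x) = x" and M'M: "\<And>x. M' (M x) = x"
    using moebius_inverse[OF \<open>moebius M\<close>] by metis
  define \<phi> where "\<phi> = M \<circ> scaling (t^2) \<circ> M'"
  have "moebius \<phi>"
    unfolding \<phi>_def using \<open>moebius M\<close> \<open>moebius M'\<close> \<open>t \<noteq> 0\<close> by (simp add: moebius_comp moebius_scaling)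
  moreover have "h \<circ> scaling t = \<phi> \<circ> h"
  proof
    fix x
    have "sq_map (scaling t x) = scaling (t^2) (sq_map x)"
      using fun_cong[OF sq_map_scaling, of t x] by simp
    then show "(h \<circ> scaling t) x = (\<phi> \<circ> h) x" by (simp add: h \<phi>_def M'M)
  qed
  moreover have "surj h"
    unfolding h using surj_sq_map MM' by (metis comp_surj surjI)
  moreover obtain k' where k: "k = Suc k'" using \<open>k \<noteq> 0\<close> not0_implies_Suc by blast
  moreover have "scaling t \<in> Deck (h ^^ k)"
    unfolding G by (intro CollectI exI[of _ 1]) simp
  ultimately have "\<phi> \<in> Deck (h ^^ k')"
    using Deck_semiconj[of h "scaling t" \<phi> k'] by simp
  then have "\<phi> \<in> Deck (h ^^ k)"
    using Deck_funpow_mono[of k' k] k by auto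
  then obtain n where \<phi>: "\<phi> = scaling (t ^ n)"
    using G by auto
  have "t ^ n \<noteq> 1"
  proof
    assume "t ^ n = 1"
    then have "M (scaling (t^2) (Some 1)) = M (Some 1)"
      using fun_cong[OF \<phi>, of "M (Some 1)"] by (simp add: \<phi>_def M'M scaling_1)
    then have "scaling (t^2) (Some 1) = Some 1"
      by (rule moebius_inj[OF \<open>moebius M\<close>])
    with \<open>t^2 \<noteq> 1\<close> show False by simp
  qed
  moreover have "scaling (t ^ n) \<circ> M = M \<circ> scaling (t^2)"
    by (simp add: \<phi>[symmetric] \<phi>_def fun_eq_iff M'M)
  ultimately have "(\<exists>c. c \<noteq> 0 \<and> M = scaling c) \<or> (\<exists>c. c \<noteq> 0 \<and> M = scaling c \<circ> recip)"
    by (intro moebius_intertwining_scaling[OF \<open>moebius M\<close>, of "t ^ n" "scaling (t^2)"]) simp_all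
  then show ?thesis
    unfolding h by (rule power_map_comp_sq_map)
qed

theorem mainTheorem13:
  fixes f :: "complex option \<Rightarrow> complex option"
  assumes "quadratic_map f"
  shows "(\<exists>k::nat. cyclic_order_gt2 (Deck (f ^^ k))) \<longleftrightarrow> power_map f"
proof
  assume "\<exists>k. cyclic_order_gt2 (Deck (f ^^ k))"
  then obtain k where cyc: "cyclic_order_gt2 (Deck (f ^^ k))" ..
  obtain M N where "moebius M" "moebius N" and f: "f = N \<circ> sq_map \<circ> M"
    using quadratic_map_decomposition[OF assms] by blast
  obtain M' where "moebius M'" and MM': "\<And>x. M (M' x) = x" and M'M: "\<And>x. M' (M x) = x"
    using moebius_inverse[OF \<open>moebius M\<close>] by metis
  define h where "h = M \<circ> f \<circ> M'"
  have "h = (M \<circ> N) \<circ> sq_map"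
    by (simp add: h_def f fun_eq_iff MM')
  moreover have "cyclic_order_gt2 (Deck (h ^^ k))"
    unfolding h_def using cyclic_order_gt2_Deck_conj[OF \<open>moebius M\<close> \<open>moebius M'\<close> MM' M'M cyc] .
  ultimately have "power_map h"
    using power_map_if_cyclic_Deck moebius_comp[OF \<open>moebius M\<close> \<open>moebius N\<close>] by blast
  moreover have "f = M' \<circ> h \<circ> M"
    by (simp add: h_def fun_eq_iff M'M)
  ultimately show "power_map f"
    using power_map_conj[OF MM' \<open>moebius M'\<close>] by simp
next
  assume "power_map f"
  then show "\<exists>k. cyclic_order_gt2 (Deck (f ^^ k))"
    using power_map_cyclic_Deck by blast
qed

end
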